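(* Let $J$ be a bounded closed nondegenerate interval of length $|J|$. Then $$ \left\|\frac{e^x-e^y}{e^x+e^y}\right\|_{\mathfrak M_{J,J}}\ge\frac19\min\big\{|J|,\ 1+\log_+|J|\big\}. $$
   Context: For positive $\sigma$-finite measures $\mu$ on $\mathcal X$ and $\nu$ on $\mathcal Y$ and $k\in L^2(\mu\otimes\nu)$, $\|k\|_{\mathcal B}^{\mu,\nu}$ denotes the operator norm of the integral operator $g\mapsto\int k(x,y)g(y)\,d\nu(y)$ from $L^2(\nu)$ to $L^2(\mu)$. For closed $\mathcal X,\mathcal Y\subset\mathbb R$ and a bounded Borel function $\Phi$ on $\mathcal X\times\mathcal Y$, the Schur multiplier norm is $\|\Phi\|_{\mathfrak M_{\mathcal X,\mathcal Y}}\stackrel{\mathrm{def}}{=}\sup_{\mu,\nu}\sup\{\|\Phi k\|_{\mathcal B}^{\mu,\nu}: k\in L^2(\mu\otimes\nu),\ \|k\|_{\mathcal B}^{\mu,\nu}\le1\}$, the outer supremum over all regular positive Borel measures $\mu$ on $\mathcal X$ and $\nu$ on $\mathcal Y$. $\log_+t=\max\{\log t,0\}$. *)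

theory Defs
  imports "HOL-Analysis.Analysis"
begin

definition regular_borel_measure :: "real set \<Rightarrow> real measure \<Rightarrow> bool" where
  "regular_borel_measure X M \<longleftrightarrow>
     space M = X \<and> sets M = sets (restrict_space borel X) \<and> sigma_finite_measure M \<and>
     (\<forall>B\<in>sets M.
        emeasure M B = (INF U\<in>{U. \<exists>V. open V \<and> U = V \<inter> X \<and> B \<subseteq> U}. emeasure M U) \<and>
        emeasure M B = (SUP K\<in>{K. compact K \<and> K \<subseteq> B}. emeasure M K))"

definition L2 :: "'a measure \<Rightarrow> ('a \<Rightarrow> complex) set" where
  "L2 M = {g. g \<in> borel_measurable M \<and> integrable M (\<lambda>x. (cmod (g x))^2)}"

definition L2norm :: "'a measure \<Rightarrow> ('a \<Rightarrow> complex) \<Rightarrow> real" where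
  "L2norm M g = sqrt (\<integral>x. (cmod (g x))^2 \<partial>M)"

definition intop :: "'b measure \<Rightarrow> ('a \<times> 'b \<Rightarrow> complex) \<Rightarrow> ('b \<Rightarrow> complex) \<Rightarrow> 'a \<Rightarrow> complex" where
  "intop \<nu> k g = (\<lambda>x. \<integral>y. k (x, y) * g y \<partial>\<nu>)"

definition opnorm :: "'a measure \<Rightarrow> 'b measure \<Rightarrow> ('a \<times> 'b \<Rightarrow> complex) \<Rightarrow> ereal" where
  "opnorm \<mu> \<nu> k = (SUP g\<in>{g\<in>L2 \<nu>. L2norm \<nu> g \<le> 1}. ereal (L2norm \<mu> (intop \<nu> k g)))"

definition schur_norm :: "real set \<Rightarrow> real set \<Rightarrow> (real \<times> real \<Rightarrow> complex) \<Rightarrow> ereal" where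
  "schur_norm X Y \<Phi> =
     (SUP (\<mu>, \<nu>, k)\<in>{(\<mu>, \<nu>, k). regular_borel_measure X \<mu> \<and> regular_borel_measure Y \<nu> \<and>
                       k \<in> L2 (\<mu> \<Otimes>\<^sub>M \<nu>) \<and> opnorm \<mu> \<nu> k \<le> 1}.
        opnorm \<mu> \<nu> (\<lambda>p. \<Phi> p * k p))"

definition log_plus :: "real \<Rightarrow> real" where
  "log_plus t = max (ln t) 0"

end

theory Submission
  imports Defs
begin

(*
  1. Discretisation.  Finite sums of Dirac masses are admissible measures, so the Schur norm
     dominates the norm of every matrix Schur multiplier (Phi (x i, y j)) acting on
     l^2-contractions (schur_norm_ge_grid).
  2. Circulant test matrices.  Circulant matrices with unimodular eigenvalues are contractions
     (discrete Parseval).  Testing with them yields the Schur norm >= N^-2 sum_l |<Phi e_l, e_l>|,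
     where e_l are the Fourier modes (schur_norm_ge_fourier_diagonal).
  3. Triangular truncation.  On a grid of spacing 4 the matrix of Phi is exponentially close to
     the sign matrix sign (i - j), whose Fourier diagonal has modulus N cot (pi l / N); summing
     over l gives a harmonic sum and hence (log N) / pi - O(1) (tanh_grid_fourier_lower_bound).
  4. Conclusion.  With N about |J| / 4 this gives (1 + log |J|) / 9 when log |J| >= 7; otherwise
     the 1 x 1 test matrix at the endpoints gives tanh (|J| / 2), which is large enough.
*)

lemma borel_Int_in_restrict_space:
  "B \<in> sets borel \<Longrightarrow> B \<inter> X \<in> sets (restrict_space borel X)"
  by (auto simp: sets_restrict_space)

lemma regular_borel_measureI:
  fixes M :: "real measure"
  assumes space: "space M = X" and sets: "sets M = sets (restrict_space borel X)"
    and sigma_finite: "sigma_finite_measure M"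
    and outer: "\<And>B. B \<in> sets M \<Longrightarrow> \<exists>V. open V \<and> B \<subseteq> V \<inter> X \<and> emeasure M (V \<inter> X) = emeasure M B"
    and inner: "\<And>B. B \<in> sets M \<Longrightarrow> \<exists>K. compact K \<and> K \<subseteq> B \<and> emeasure M K = emeasure M B"
  shows "regular_borel_measure X M"
  unfolding regular_borel_measure_def
proof (intro conjI ballI space sets sigma_finite)
  fix B assume B: "B \<in> sets M"
  have open_in_sets: "V \<inter> X \<in> sets M" if "open V" for V
    using that by (simp add: sets borel_Int_in_restrict_space)
  obtain V where V: "open V" "B \<subseteq> V \<inter> X" "emeasure M (V \<inter> X) = emeasure M B"
    using outer[OF B] by blast
  show "emeasure M B = (INF U\<in>{U. \<exists>V. open V \<and> U = V \<inter> X \<and> B \<subseteq> U}. emeasure M U)"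
  proof (rule antisym)
    show "emeasure M B \<le> (INF U\<in>{U. \<exists>V. open V \<and> U = V \<inter> X \<and> B \<subseteq> U}. emeasure M U)"
      using open_in_sets by (auto intro!: INF_greatest emeasure_mono)
    show "(INF U\<in>{U. \<exists>V. open V \<and> U = V \<inter> X \<and> B \<subseteq> U}. emeasure M U) \<le> emeasure M B"
      using V by (intro INF_lower2[of "V \<inter> X"]) auto
  qed
  obtain K where K: "compact K" "K \<subseteq> B" "emeasure M K = emeasure M B"
    using inner[OF B] by blast
  show "emeasure M B = (SUP K\<in>{K. compact K \<and> K \<subseteq> B}. emeasure M K)"
  proof (rule antisym)
    show "emeasure M B \<le> (SUP K\<in>{K. compact K \<and> K \<subseteq> B}. emeasure M K)"
      using K by (intro SUP_upper2[of K]) auto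
    have "K' \<in> sets M" if "compact K'" "K' \<subseteq> B" for K'
      using that sets.sets_into_space[OF B] borel_Int_in_restrict_space[of K' X]
      by (auto simp: sets space compact_imp_closed Int_absorb2)
    then show "(SUP K\<in>{K. compact K \<and> K \<subseteq> B}. emeasure M K) \<le> emeasure M B"
      using B by (auto intro!: SUP_least emeasure_mono)
  qed
qed

definition dirac_sum :: "real set \<Rightarrow> nat \<Rightarrow> (nat \<Rightarrow> real) \<Rightarrow> real measure" where
  "dirac_sum X N x = distr (count_space {..<N}) (restrict_space borel X) x"

lemma measurable_points:
  assumes "x ` {..<N} \<subseteq> X"
  shows "x \<in> count_space {..<N} \<rightarrow>\<^sub>M restrict_space borel X"
  using assms by (auto simp: measurable_count_space_eq1 space_restrict_space)

lemma space_dirac_sum [simp]: "space (dirac_sum X N x) = X"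
  by (simp add: dirac_sum_def space_restrict_space)

lemma sets_dirac_sum [simp]: "sets (dirac_sum X N x) = sets (restrict_space borel X)"
  by (simp add: dirac_sum_def)

lemma measurable_dirac_sum_iff [simp]:
  "f \<in> borel_measurable (dirac_sum X N x) \<longleftrightarrow> f \<in> borel_measurable (restrict_space borel X)"
  by (simp add: dirac_sum_def)

lemma integral_dirac_sum:
  fixes f :: "real \<Rightarrow> 'c::{banach,second_countable_topology}"
  assumes "x ` {..<N} \<subseteq> X" "f \<in> borel_measurable (restrict_space borel X)"
  shows "integral\<^sup>L (dirac_sum X N x) f = (\<Sum>i<N. f (x i))"
  unfolding dirac_sum_def
  by (simp add: integral_distr[OF measurable_points[OF assms(1)] assms(2)]
      lebesgue_integral_count_space_finite)

lemma emeasure_dirac_sum: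
  assumes "x ` {..<N} \<subseteq> X" "B \<in> sets (restrict_space borel X)"
  shows "emeasure (dirac_sum X N x) B = of_nat (card {i. i < N \<and> x i \<in> B})"
proof -
  have "emeasure (dirac_sum X N x) B = emeasure (count_space {..<N}) (x -` B \<inter> {..<N})"
    unfolding dirac_sum_def using emeasure_distr[OF measurable_points[OF assms(1)] assms(2)] by simp
  also have "\<dots> = of_nat (card (x -` B \<inter> {..<N}))"
    by (rule emeasure_count_space_finite) auto
  also have "x -` B \<inter> {..<N} = {i. i < N \<and> x i \<in> B}" by auto
  finally show ?thesis .
qed

lemma finite_measure_dirac_sum:
  assumes "x ` {..<N} \<subseteq> X"
  shows "finite_measure (dirac_sum X N x)"
  unfolding dirac_sum_def
  by (rule finite_measure.finite_measure_distr[OF _ measurable_points[OF assms]])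
     (simp add: finite_measure_count_space)

lemma regular_dirac_sum:
  assumes points: "x ` {..<N} \<subseteq> X"
  shows "regular_borel_measure X (dirac_sum X N x)"
proof (rule regular_borel_measureI)
  show "sigma_finite_measure (dirac_sum X N x)"
    using finite_measure_dirac_sum[OF points] by (simp add: finite_measure_def)
  let ?P = "x ` {..<N}"
  have same_measure: "emeasure (dirac_sum X N x) C = emeasure (dirac_sum X N x) B"
    if "B \<in> sets (dirac_sum X N x)" "C \<in> sets (dirac_sum X N x)" "C \<inter> ?P = B \<inter> ?P" for B C
  proof -
    have "{i. i < N \<and> x i \<in> C} = {i. i < N \<and> x i \<in> B}"
      using that(3) by blast
    then show ?thesis
      using that(1,2) by (simp add: emeasure_dirac_sum[OF points])
  qed
  fix B assume B: "B \<in> sets (dirac_sum X N x)"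
  have "B \<subseteq> X" using sets.sets_into_space[OF B] by simp
  show "\<exists>V. open V \<and> B \<subseteq> V \<inter> X \<and> emeasure (dirac_sum X N x) (V \<inter> X) = emeasure (dirac_sum X N x) B"
  proof (intro exI conjI)
    show "open (- (?P - B))" by (intro open_Compl finite_imp_closed) auto
    then show "emeasure (dirac_sum X N x) (- (?P - B) \<inter> X) = emeasure (dirac_sum X N x) B"
      using B points borel_Int_in_restrict_space[of "- (?P - B)" X] by (intro same_measure) auto
  qed (use \<open>B \<subseteq> X\<close> in auto)
  show "\<exists>K. compact K \<and> K \<subseteq> B \<and> emeasure (dirac_sum X N x) K = emeasure (dirac_sum X N x) B"
  proof (intro exI conjI)
    show "compact (?P \<inter> B)" by (intro finite_imp_compact) simp
    then show "emeasure (dirac_sum X N x) (?P \<inter> B) = emeasure (dirac_sum X N x) B"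
      using B borel_Int_in_restrict_space[of "?P \<inter> B" X] \<open>B \<subseteq> X\<close>
      by (intro same_measure) (auto simp: compact_imp_closed Int_absorb2 Int_assoc)
  qed auto
qed simp_all

definition l2_contraction :: "nat \<Rightarrow> nat \<Rightarrow> (nat \<Rightarrow> nat \<Rightarrow> complex) \<Rightarrow> bool" where
  "l2_contraction N M K \<longleftrightarrow>
     (\<forall>g. (\<Sum>i<N. (cmod (\<Sum>j<M. K i j * g j))^2) \<le> (\<Sum>j<M. (cmod (g j))^2))"

(* The kernel on X x Y which is K i j at (x i, y j) and zero elsewhere; with respect to the
   Dirac sums it represents the matrix K. *)
definition grid_kernel ::
    "nat \<Rightarrow> (nat \<Rightarrow> real) \<Rightarrow> nat \<Rightarrow> (nat \<Rightarrow> real) \<Rightarrow> (nat \<Rightarrow> nat \<Rightarrow> complex) \<Rightarrow> real \<times> real \<Rightarrow> complex" where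
  "grid_kernel N x M y K p =
     (\<Sum>i<N. \<Sum>j<M. K i j * indicator {x i} (fst p) * indicator {y j} (snd p))"

lemma grid_kernel_at_grid:
  assumes "inj_on x {..<N}" "inj_on y {..<M}" "i < N" "j < M"
  shows "grid_kernel N x M y K (x i, y j) = K i j"
proof -
  have "grid_kernel N x M y K (x i, y j) =
      (\<Sum>i'<N. \<Sum>j'<M. if i' = i then (if j' = j then K i j else 0) else 0)"
    unfolding grid_kernel_def
    by (intro sum.cong refl) (use assms in \<open>auto simp: indicator_def inj_on_def\<close>)
  also have "\<dots> = K i j"
    using assms(3,4) by (simp add: sum.If_cases)
  finally show ?thesis .
qed

lemma grid_kernel_measurable_fst: "(\<lambda>s. grid_kernel N x M y K (s, t)) \<in> borel_measurable borel"
  unfolding grid_kernel_def by measurable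

lemma grid_kernel_measurable_snd: "(\<lambda>t. grid_kernel N x M y K (s, t)) \<in> borel_measurable borel"
  unfolding grid_kernel_def by measurable

lemma grid_kernel_L2:
  assumes "x ` {..<N} \<subseteq> X" "y ` {..<M} \<subseteq> Y"
  shows "grid_kernel N x M y K \<in> L2 (dirac_sum X N x \<Otimes>\<^sub>M dirac_sum Y M y)"
proof -
  let ?XY = "dirac_sum X N x \<Otimes>\<^sub>M dirac_sum Y M y"
  have indicator_measurable: "(\<lambda>s. indicator {t} s :: complex) \<in> borel_measurable (dirac_sum Z n z)"
    for t :: real and Z n z
    by (simp add: measurable_restrict_space1)
  have measurable: "grid_kernel N x M y K \<in> borel_measurable ?XY"
    unfolding grid_kernel_def
    by (intro borel_measurable_sum borel_measurable_times borel_measurable_const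
        measurable_compose[OF measurable_fst indicator_measurable]
        measurable_compose[OF measurable_snd indicator_measurable])
  define C where "C = (\<Sum>i<N. \<Sum>j<M. cmod (K i j))"
  have bounded: "cmod (grid_kernel N x M y K p) \<le> C" for p
    unfolding grid_kernel_def C_def
    by (rule order.trans[OF norm_sum sum_mono], rule order.trans[OF norm_sum sum_mono])
       (auto simp: norm_mult indicator_def)
  have "integrable ?XY (\<lambda>p. (cmod (grid_kernel N x M y K p))^2)"
  proof (rule finite_measure.integrable_const_bound[where B = "C^2"])
    show "finite_measure ?XY"
      using assms by (intro finite_measure_pair_measure finite_measure_dirac_sum)
    show "AE p in ?XY. norm ((cmod (grid_kernel N x M y K p))^2) \<le> C^2"
      using bounded by (auto intro!: power_mono)
    show "(\<lambda>p. (cmod (grid_kernel N x M y K p))^2) \<in> borel_measurable ?XY"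
      using measurable by measurable
  qed
  with measurable show ?thesis by (simp add: L2_def)
qed

lemma L2norm_dirac_sum:
  assumes "x ` {..<N} \<subseteq> X" "f \<in> borel_measurable (restrict_space borel X)"
  shows "L2norm (dirac_sum X N x) f = sqrt (\<Sum>i<N. (cmod (f (x i)))^2)"
  unfolding L2norm_def using assms by (subst integral_dirac_sum) auto

lemma L2_dirac_sum:
  assumes "x ` {..<N} \<subseteq> X" "f \<in> borel_measurable (restrict_space borel X)"
  shows "f \<in> L2 (dirac_sum X N x)"
proof -
  have "integrable (dirac_sum X N x) (\<lambda>t. (cmod (f t))^2)"
    unfolding dirac_sum_def using assms(2)
    by (subst integrable_distr_eq[OF measurable_points[OF assms(1)]])
       (auto intro: integrable_count_space)
  with assms(2) show ?thesis by (simp add: L2_def)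
qed

lemma L2norm_intop_grid:
  fixes \<Phi> :: "real \<times> real \<Rightarrow> complex"
  assumes x: "x ` {..<N} \<subseteq> X" "inj_on x {..<N}" and y: "y ` {..<M} \<subseteq> Y" "inj_on y {..<M}"
    and \<Phi>: "\<And>t. (\<lambda>s. \<Phi> (s, t)) \<in> borel_measurable borel" "\<And>s. (\<lambda>t. \<Phi> (s, t)) \<in> borel_measurable borel"
    and g: "g \<in> borel_measurable (restrict_space borel Y)"
  shows "L2norm (dirac_sum X N x) (intop (dirac_sum Y M y) (\<lambda>p. \<Phi> p * grid_kernel N x M y K p) g)
       = sqrt (\<Sum>i<N. (cmod (\<Sum>j<M. \<Phi> (x i, y j) * K i j * g (y j)))^2)"
proof -
  let ?k = "grid_kernel N x M y K"
  have "intop (dirac_sum Y M y) (\<lambda>p. \<Phi> p * ?k p) g = (\<lambda>s. \<Sum>j<M. \<Phi> (s, y j) * ?k (s, y j) * g (y j))"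
    unfolding intop_def
    by (subst integral_dirac_sum[OF y(1)]) (intro borel_measurable_times[OF _ g]
        borel_measurable_times measurable_restrict_space1 \<Phi>(2) grid_kernel_measurable_snd, simp)
  moreover have "(\<lambda>s. \<Sum>j<M. \<Phi> (s, y j) * ?k (s, y j) * g (y j)) \<in> borel_measurable (restrict_space borel X)"
    by (intro borel_measurable_sum borel_measurable_times borel_measurable_const
        measurable_restrict_space1 \<Phi>(1) grid_kernel_measurable_fst)
  ultimately show ?thesis
    using x y by (simp add: L2norm_dirac_sum grid_kernel_at_grid)
qed

lemma opnorm_grid_kernel:
  assumes x: "x ` {..<N} \<subseteq> X" "inj_on x {..<N}" and y: "y ` {..<M} \<subseteq> Y" "inj_on y {..<M}"
    and K: "l2_contraction N M K"
  shows "opnorm (dirac_sum X N x) (dirac_sum Y M y) (grid_kernel N x M y K) \<le> 1"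
  unfolding opnorm_def
proof (rule SUP_least)
  fix g assume g: "g \<in> {g \<in> L2 (dirac_sum Y M y). L2norm (dirac_sum Y M y) g \<le> 1}"
  then have g_measurable: "g \<in> borel_measurable (restrict_space borel Y)"
    by (simp add: L2_def)
  have "L2norm (dirac_sum X N x) (intop (dirac_sum Y M y) (grid_kernel N x M y K) g)
      = sqrt (\<Sum>i<N. (cmod (\<Sum>j<M. K i j * g (y j)))^2)"
    using L2norm_intop_grid[OF x y, of "\<lambda>_. 1", OF _ _ g_measurable] by simp
  also have "\<dots> \<le> sqrt (\<Sum>j<M. (cmod (g (y j)))^2)"
    using K by (simp add: l2_contraction_def)
  also have "\<dots> = L2norm (dirac_sum Y M y) g"
    by (rule L2norm_dirac_sum[OF y(1) g_measurable, symmetric])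
  also have "\<dots> \<le> 1"
    using g by simp
  finally show "ereal (L2norm (dirac_sum X N x) (intop (dirac_sum Y M y) (grid_kernel N x M y K) g)) \<le> 1"
    by simp
qed

lemma schur_norm_ge_grid:
  fixes \<Phi> :: "real \<times> real \<Rightarrow> complex"
  assumes x: "x ` {..<N} \<subseteq> X" "inj_on x {..<N}" and y: "y ` {..<M} \<subseteq> Y" "inj_on y {..<M}"
    and \<Phi>: "\<And>t. (\<lambda>s. \<Phi> (s, t)) \<in> borel_measurable borel" "\<And>s. (\<lambda>t. \<Phi> (s, t)) \<in> borel_measurable borel"
    and K: "l2_contraction N M K"
    and g: "g \<in> borel_measurable borel" "(\<Sum>j<M. (cmod (g (y j)))^2) \<le> 1"
  shows "ereal (sqrt (\<Sum>i<N. (cmod (\<Sum>j<M. \<Phi> (x i, y j) * K i j * g (y j)))^2)) \<le> schur_norm X Y \<Phi>"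
proof -
  let ?\<mu> = "dirac_sum X N x" and ?\<nu> = "dirac_sum Y M y" and ?k = "grid_kernel N x M y K"
  have g_restricted: "g \<in> borel_measurable (restrict_space borel Y)"
    using g(1) by (rule measurable_restrict_space1)
  have "g \<in> L2 ?\<nu>"
    by (rule L2_dirac_sum[OF y(1) g_restricted])
  moreover have "L2norm ?\<nu> g \<le> 1"
    using g(2) by (simp add: L2norm_dirac_sum[OF y(1) g_restricted])
  ultimately have "ereal (sqrt (\<Sum>i<N. (cmod (\<Sum>j<M. \<Phi> (x i, y j) * K i j * g (y j)))^2))
      \<le> opnorm ?\<mu> ?\<nu> (\<lambda>p. \<Phi> p * ?k p)"
    unfolding opnorm_def L2norm_intop_grid[OF x y \<Phi> g_restricted, symmetric]
    by (intro SUP_upper) simp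
  also have "\<dots> \<le> schur_norm X Y \<Phi>"
    unfolding schur_norm_def
    using regular_dirac_sum[OF x(1)] regular_dirac_sum[OF y(1)] grid_kernel_L2[OF x(1) y(1)]
      opnorm_grid_kernel[OF x y K]
    by (intro SUP_upper2[of "(?\<mu>, ?\<nu>, ?k)"]) auto
  finally show ?thesis .
qed

definition fourier_mode :: "nat \<Rightarrow> nat \<Rightarrow> nat \<Rightarrow> complex" where
  "fourier_mode N l i = cis (2 * pi * real l * real i / real N)"

lemma fourier_mode_sym: "fourier_mode N l i = fourier_mode N i l"
  by (simp add: fourier_mode_def mult.commute mult.left_commute)

lemma norm_fourier_mode [simp]: "cmod (fourier_mode N l i) = 1"
  by (simp add: fourier_mode_def)

lemma fourier_mode_power: "fourier_mode N l i = fourier_mode N l 1 ^ i"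
  unfolding fourier_mode_def by (subst Complex.DeMoivre) (simp add: mult_ac)

lemma cis_fraction_neq_1:
  fixes d :: int and N :: nat
  assumes "\<bar>d\<bar> < int N" "d \<noteq> 0"
  shows "cis (2 * pi * real_of_int d / real N) \<noteq> 1"
proof
  assume "cis (2 * pi * real_of_int d / real N) = 1"
  then obtain n :: int where "2 * pi * real_of_int d / real N = real_of_int (2 * n) * pi"
    by (auto simp: cis_conv_exp exp_eq_1)
  then have "real_of_int d = real_of_int n * real N"
    using assms by (simp add: field_simps)
  then have d: "d = n * int N"
    by (metis of_int_eq_iff of_int_mult of_int_of_nat_eq)
  with assms have "n \<noteq> 0" by auto
  then have "1 * int N \<le> \<bar>n\<bar> * int N"
    by (intro mult_right_mono) auto
  with assms(1) d show False by (simp add: abs_mult)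
qed

lemma fourier_mode_orthogonal:
  assumes "l < N" "l' < N"
  shows "(\<Sum>i<N. fourier_mode N l i * cnj (fourier_mode N l' i)) = (if l = l' then of_nat N else 0)"
proof -
  define z where "z = cis (2 * pi * real_of_int (int l - int l') / real N)"
  have N: "N > 0" using assms by simp
  have power_z: "z ^ i = cis (real i * (2 * pi * real_of_int (int l - int l') / real N))" for i
    unfolding z_def by (rule Complex.DeMoivre)
  have terms: "fourier_mode N l i * cnj (fourier_mode N l' i) = z ^ i" for i
    unfolding power_z fourier_mode_def cis_cnj cis_mult
    by (rule arg_cong[where f = cis]) (use N in \<open>simp add: field_simps\<close>)
  have "z ^ N = cis (2 * pi * real_of_int (int l - int l'))"
    unfolding power_z using N by simp
  also have "\<dots> = 1" by (rule cis_multiple_2pi) simp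
  finally have "z ^ N = 1" .
  moreover have "z \<noteq> 1" if "l \<noteq> l'"
    unfolding z_def using that assms by (intro cis_fraction_neq_1) auto
  ultimately show ?thesis
    unfolding terms by (auto simp: z_def sum_gp_strict)
qed

lemma fourier_parseval:
  assumes "N > 0"
  shows "(\<Sum>i<N. (cmod (\<Sum>l<N. a l * fourier_mode N l i))^2) = real N * (\<Sum>l<N. (cmod (a l))^2)"
proof -
  let ?e = "fourier_mode N"
  have "complex_of_real (\<Sum>i<N. (cmod (\<Sum>l<N. a l * ?e l i))^2)
      = (\<Sum>i<N. (\<Sum>l<N. a l * ?e l i) * cnj (\<Sum>l'<N. a l' * ?e l' i))"
    by (simp only: of_real_sum complex_norm_square)
  also have "\<dots> = (\<Sum>i<N. \<Sum>l<N. \<Sum>l'<N. (a l * cnj (a l')) * (?e l i * cnj (?e l' i)))"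
    by (simp add: sum_product mult_ac)
  also have "\<dots> = (\<Sum>l<N. \<Sum>l'<N. \<Sum>i<N. (a l * cnj (a l')) * (?e l i * cnj (?e l' i)))"
    by (subst sum.swap, subst (2) sum.swap) (rule refl)
  also have "\<dots> = (\<Sum>l<N. \<Sum>l'<N. (a l * cnj (a l')) * (if l = l' then of_nat N else 0))"
    by (intro sum.cong refl) (simp add: sum_distrib_left[symmetric] fourier_mode_orthogonal)
  also have "\<dots> = (\<Sum>l<N. (a l * cnj (a l)) * of_nat N)"
    by (intro sum.cong refl) (simp add: if_distrib cong: if_cong)
  also have "\<dots> = complex_of_real (real N * (\<Sum>l<N. (cmod (a l))^2))"
    by (simp only: of_real_mult of_real_sum complex_norm_square sum_distrib_left of_real_of_nat_eq)
       (simp add: mult_ac)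
  finally show ?thesis by (simp only: of_real_eq_iff)
qed

(* The circulant matrix with eigenvalue lam l on the l-th Fourier mode. *)
definition circulant :: "nat \<Rightarrow> (nat \<Rightarrow> complex) \<Rightarrow> nat \<Rightarrow> nat \<Rightarrow> complex" where
  "circulant N lam i j = (\<Sum>l<N. lam l * fourier_mode N l i * cnj (fourier_mode N l j)) / of_nat N"

lemma circulant_l2_contraction:
  assumes N: "N > 0" and lam: "\<And>l. l < N \<Longrightarrow> cmod (lam l) \<le> 1"
  shows "l2_contraction N N (circulant N lam)"
  unfolding l2_contraction_def
proof
  fix g :: "nat \<Rightarrow> complex"
  let ?e = "fourier_mode N"
  define G where "G l = (\<Sum>j<N. cnj (?e l j) * g j)" for l
  have rows: "(\<Sum>j<N. circulant N lam i j * g j) = (\<Sum>l<N. (lam l * G l / of_nat N) * ?e l i)" for i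
    unfolding G_def circulant_def
    by (simp add: sum_distrib_left sum_distrib_right sum_divide_distrib mult_ac)
       (subst sum.swap, rule refl)
  have G: "(\<Sum>l<N. (cmod (G l))^2) = real N * (\<Sum>j<N. (cmod (g j))^2)"
  proof -
    have "cnj (G l) = (\<Sum>j<N. cnj (g j) * ?e j l)" for l
      unfolding G_def by (simp add: cnj_sum fourier_mode_sym mult.commute)
    then have "cmod (G l) = cmod (\<Sum>j<N. cnj (g j) * ?e j l)" for l
      by (metis complex_mod_cnj)
    then show ?thesis
      using fourier_parseval[OF N, of "\<lambda>j. cnj (g j)"] by simp
  qed
  have "(\<Sum>i<N. (cmod (\<Sum>j<N. circulant N lam i j * g j))^2)
      = real N * (\<Sum>l<N. (cmod (lam l * G l / of_nat N))^2)"
    unfolding rows by (rule fourier_parseval[OF N])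
  also have "\<dots> \<le> real N * (\<Sum>l<N. (cmod (G l))^2 / (real N)^2)"
  proof (intro mult_left_mono sum_mono)
    fix l assume "l \<in> {..<N}"
    then have "cmod (lam l * G l) \<le> cmod (G l)"
      using lam by (simp add: norm_mult mult_left_le_one_le)
    then show "(cmod (lam l * G l / of_nat N))^2 \<le> (cmod (G l))^2 / (real N)^2"
      by (simp add: norm_divide power_divide divide_right_mono power_mono)
  qed simp
  also have "\<dots> = (\<Sum>l<N. (cmod (G l))^2) / real N"
    using N by (simp add: sum_divide_distrib[symmetric] power2_eq_square)
  also have "\<dots> = (\<Sum>j<N. (cmod (g j))^2)"
    using N by (simp add: G)
  finally show "(\<Sum>i<N. (cmod (\<Sum>j<N. circulant N lam i j * g j))^2) \<le> (\<Sum>j<N. (cmod (g j))^2)" .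
qed

definition fourier_diagonal :: "(nat \<Rightarrow> nat \<Rightarrow> complex) \<Rightarrow> nat \<Rightarrow> nat \<Rightarrow> complex" where
  "fourier_diagonal F N l = (\<Sum>i<N. \<Sum>j<N. F i j * (fourier_mode N l i * cnj (fourier_mode N l j)))"

lemma sum_entries_times_circulant:
  "(\<Sum>i<N. \<Sum>j<N. F i j * circulant N lam i j) = (\<Sum>l<N. lam l * fourier_diagonal F N l) / of_nat N"
proof -
  have "(\<Sum>i<N. \<Sum>j<N. F i j * circulant N lam i j)
      = (\<Sum>i<N. \<Sum>j<N. \<Sum>l<N. lam l * (F i j * (fourier_mode N l i * cnj (fourier_mode N l j)))) / of_nat N"
    by (simp add: circulant_def sum_distrib_left sum_divide_distrib mult_ac)
  also have "\<dots> = (\<Sum>l<N. \<Sum>i<N. \<Sum>j<N. lam l * (F i j * (fourier_mode N l i * cnj (fourier_mode N l j)))) / of_nat N"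
    by (subst (2) sum.swap) (subst sum.swap, rule refl)
  finally show ?thesis
    by (simp add: fourier_diagonal_def sum_distrib_left)
qed

lemma norm_sum_le_l2:
  fixes h :: "nat \<Rightarrow> complex"
  shows "cmod (\<Sum>i<N. h i) \<le> sqrt (real N) * sqrt (\<Sum>i<N. (cmod (h i))^2)"
proof -
  have "(cmod (\<Sum>i<N. h i))^2 \<le> (\<Sum>i<N. cmod (h i))^2"
    by (intro power_mono norm_sum) simp
  also have "\<dots> \<le> real N * (\<Sum>i<N. (cmod (h i))^2)"
    using sum_squared_le_sum_of_squares[of "\<lambda>i. cmod (h i)" "{..<N}"] by (simp add: mult.commute)
  finally show ?thesis
    by (metis norm_ge_zero real_le_rsqrt real_sqrt_mult)
qed

(* Choosing the circulant contraction with eigenvalues of modulus one aligned with the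
   Fourier diagonal of (Phi (x i, x j)), and testing on the constant unit vector, gives the
   lower bound N^-2 * sum_l |<Phi e_l, e_l>|. *)
lemma schur_norm_ge_fourier_diagonal:
  fixes \<Phi> :: "real \<times> real \<Rightarrow> complex"
  assumes N: "N > 0" and x: "x ` {..<N} \<subseteq> X" "inj_on x {..<N}"
    and \<Phi>: "\<And>t. (\<lambda>s. \<Phi> (s, t)) \<in> borel_measurable borel" "\<And>s. (\<lambda>t. \<Phi> (s, t)) \<in> borel_measurable borel"
  shows "ereal ((\<Sum>l<N. cmod (fourier_diagonal (\<lambda>i j. \<Phi> (x i, x j)) N l)) / (real N)^2)
           \<le> schur_norm X X \<Phi>"
proof -
  define P where "P = fourier_diagonal (\<lambda>i j. \<Phi> (x i, x j)) N"
  define lam where "lam l = (if P l = 0 then 0 else cnj (P l) / of_real (cmod (P l)))" for l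
  define c :: complex where "c = of_real (1 / sqrt (real N))"
  define h where "h i = (\<Sum>j<N. \<Phi> (x i, x j) * circulant N lam i j * c)" for i
  have contraction: "l2_contraction N N (circulant N lam)"
    by (rule circulant_l2_contraction[OF N]) (simp add: lam_def norm_divide)
  have lower: "ereal (sqrt (\<Sum>i<N. (cmod (h i))^2)) \<le> schur_norm X X \<Phi>"
    unfolding h_def using schur_norm_ge_grid[OF x x \<Phi> contraction, of "\<lambda>_. c"] N
    by (simp add: c_def power_divide norm_divide)
  have lam_P: "lam l * P l = of_real (cmod (P l))" for l
    by (simp add: lam_def field_simps complex_norm_square[symmetric] power2_eq_square)
  have "(\<Sum>i<N. h i) = c * (\<Sum>i<N. \<Sum>j<N. \<Phi> (x i, x j) * circulant N lam i j)"
    by (simp add: h_def sum_distrib_left mult_ac)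
  also have "\<dots> = c * (\<Sum>l<N. lam l * P l) / of_nat N"
    by (simp add: sum_entries_times_circulant P_def)
  finally have "(\<Sum>i<N. h i) = c * of_real (\<Sum>l<N. cmod (P l)) / of_nat N"
    by (simp add: lam_P)
  then have "cmod (\<Sum>i<N. h i) = (\<Sum>l<N. cmod (P l)) / (sqrt (real N) * real N)"
    by (simp add: c_def norm_mult norm_divide sum_nonneg del: of_real_sum)
  then have "cmod (\<Sum>i<N. h i) / sqrt (real N) = (\<Sum>l<N. cmod (P l)) / (sqrt (real N) * sqrt (real N) * real N)"
    by (simp add: mult.assoc)
  then have "(\<Sum>l<N. cmod (P l)) / (real N)^2 = cmod (\<Sum>i<N. h i) / sqrt (real N)"
    by (simp add: power2_eq_square)
  also have "\<dots> \<le> sqrt (\<Sum>i<N. (cmod (h i))^2)"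
    using norm_sum_le_l2[of h N] N by (simp add: field_simps)
  finally have "(\<Sum>l<N. cmod (P l)) / (real N)^2 \<le> sqrt (\<Sum>i<N. (cmod (h i))^2)" .
  then show ?thesis
    unfolding P_def by (intro order_trans[OF _ lower]) simp
qed

definition sign_matrix :: "nat \<Rightarrow> nat \<Rightarrow> complex" where
  "sign_matrix i j = (if j < i then 1 else if i < j then -1 else 0)"

definition lower_fourier_sum :: "nat \<Rightarrow> nat \<Rightarrow> complex" where
  "lower_fourier_sum N l = (\<Sum>i<N. \<Sum>j<N. if j < i then fourier_mode N l i * cnj (fourier_mode N l j) else 0)"

(* The sign matrix is the strictly lower triangular all-ones matrix minus its transpose. *)
lemma fourier_diagonal_sign_matrix:
  "fourier_diagonal sign_matrix N l = lower_fourier_sum N l - cnj (lower_fourier_sum N l)"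
proof -
  define f where "f i j = fourier_mode N l i * cnj (fourier_mode N l j)" for i j
  have "fourier_diagonal sign_matrix N l
      = (\<Sum>i<N. \<Sum>j<N. if j < i then f i j else 0) - (\<Sum>i<N. \<Sum>j<N. if i < j then f i j else 0)"
    unfolding fourier_diagonal_def f_def
    by (simp add: sum_subtractf[symmetric] sign_matrix_def) (intro sum.cong refl, auto)
  also have "(\<Sum>i<N. \<Sum>j<N. if i < j then f i j else 0) = (\<Sum>j<N. \<Sum>i<N. if i < j then f i j else 0)"
    by (rule sum.swap)
  also have "\<dots> = cnj (\<Sum>j<N. \<Sum>i<N. if i < j then f j i else 0)"
    by (simp add: cnj_sum f_def if_distrib mult.commute cong: if_cong)
  finally show ?thesis
    unfolding lower_fourier_sum_def f_def by (simp add: cnj_sum if_distrib cong: if_cong)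
qed

lemma sum_power_diff:
  fixes z :: "'a::comm_semiring_1"
  shows "(\<Sum>j<i. z ^ (i - j)) = z * (\<Sum>k<i. z ^ k)"
proof -
  have "(\<Sum>j<i. z ^ (i - j)) = (\<Sum>j<i. z ^ Suc (i - Suc j))"
    by (intro sum.cong refl) (simp add: Suc_diff_Suc)
  also have "\<dots> = (\<Sum>k<i. z ^ Suc k)"
    by (rule sum.nat_diff_reindex)
  finally show ?thesis
    by (simp add: sum_distrib_left)
qed

lemma fourier_mode_times_cnj:
  assumes "j \<le> i"
  shows "fourier_mode N l i * cnj (fourier_mode N l j) = fourier_mode N l 1 ^ (i - j)"
proof -
  define w where "w = fourier_mode N l 1"
  have "w * cnj w = 1"
    unfolding w_def by (simp flip: complex_norm_square)
  then have "w ^ j * cnj w ^ j = 1"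
    by (simp flip: power_mult_distrib)
  moreover have "fourier_mode N l i * cnj (fourier_mode N l j) = w ^ (i - j) * (w ^ j * cnj w ^ j)"
    by (subst (1 2) fourier_mode_power)
       (simp add: w_def assms mult_ac flip: power_add)
  ultimately show ?thesis
    by (simp add: w_def)
qed

lemma lower_fourier_sum_closed_form:
  assumes "0 < l" "l < N"
  shows "(1 - fourier_mode N l 1) * lower_fourier_sum N l = of_nat N * fourier_mode N l 1"
proof -
  define w where "w = fourier_mode N l 1"
  have "lower_fourier_sum N l = (\<Sum>i<N. \<Sum>j<i. w ^ (i - j))"
    unfolding lower_fourier_sum_def w_def
  proof (rule sum.cong[OF refl])
    fix i
    have "{..<i} = {j \<in> {..<N}. j < i}" if "i < N" using that by auto
    then show "i \<in> {..<N} \<Longrightarrow> (\<Sum>j<N. if j < i then fourier_mode N l i * cnj (fourier_mode N l j) else 0)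
        = (\<Sum>j<i. fourier_mode N l 1 ^ (i - j))"
      by (simp add: sum.inter_filter[symmetric] fourier_mode_times_cnj)
  qed
  also have "\<dots> = (\<Sum>i<N. w * (\<Sum>k<i. w ^ k))"
    by (simp add: sum_power_diff)
  finally have "(1 - w) * lower_fourier_sum N l = (\<Sum>i<N. w * (1 - w ^ i))"
    by (simp add: sum_distrib_left one_diff_power_eq mult.left_commute)
  also have "\<dots> = of_nat N * w - w * (\<Sum>i<N. w ^ i)"
    by (simp add: sum_subtractf sum_distrib_left right_diff_distrib)
  also have "(\<Sum>i<N. w ^ i) = (\<Sum>i<N. fourier_mode N l i * cnj (fourier_mode N 0 i))"
  proof (intro sum.cong refl)
    fix i
    have "w ^ i = fourier_mode N l i"
      unfolding w_def by (rule fourier_mode_power[symmetric])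
    then show "w ^ i = fourier_mode N l i * cnj (fourier_mode N 0 i)"
      by (simp add: fourier_mode_def)
  qed
  also have "\<dots> = 0"
    using fourier_mode_orthogonal[of l N 0] assms by simp
  finally show ?thesis
    by (simp add: w_def)
qed

lemma Im_lower_fourier_sum:
  assumes "0 < l" "l < N"
  shows "Im (lower_fourier_sum N l) = real N * sin (2 * pi * real l / real N) / (2 - 2 * cos (2 * pi * real l / real N))"
proof -
  define \<theta> where "\<theta> = 2 * pi * real l / real N"
  define w where "w = fourier_mode N l 1"
  have w: "w = cis \<theta>" by (simp add: w_def \<theta>_def fourier_mode_def)
  have "w \<noteq> 1"
    unfolding w \<theta>_def using cis_fraction_neq_1[of "int l" N] assms by simp
  then have "lower_fourier_sum N l = of_nat N * w / (1 - w)"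
    using lower_fourier_sum_closed_form[OF assms] by (simp add: w_def field_simps)
  moreover have "(Re (1 - w))^2 + (Im (1 - w))^2 = 2 - 2 * cos \<theta>"
    unfolding w by (simp add: power2_eq_square algebra_simps)
  ultimately have "Im (lower_fourier_sum N l)
      = (Im (of_nat N * w) * Re (1 - w) - Re (of_nat N * w) * Im (1 - w)) / (2 - 2 * cos \<theta>)"
    by (simp only: Im_divide)
  also have "\<dots> = real N * sin \<theta> / (2 - 2 * cos \<theta>)"
    unfolding w by (simp add: algebra_simps)
  finally show ?thesis by (simp add: \<theta>_def)
qed

(* The Fourier diagonal of the sign matrix is purely imaginary, of modulus N cot (pi l / N). *)
lemma norm_fourier_diagonal_sign_matrix:
  assumes "0 < l" "2 * l \<le> N"
  shows "cmod (fourier_diagonal sign_matrix N l) = real N * cot (pi * real l / real N)"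
proof -
  define s where "s = pi * real l / real N"
  have l_less: "l < N" using assms by simp
  have s: "0 < s" "s \<le> pi / 2" using assms l_less by (simp_all add: s_def field_simps)
  then have sin_s: "0 < sin s" and cos_s: "0 \<le> cos s"
    by (auto intro!: sin_gt_zero cos_ge_zero)
  have double: "2 * pi * real l / real N = 2 * s"
    by (simp add: s_def)
  have "Im (lower_fourier_sum N l) = real N * (2 * sin s * cos s) / (4 * (sin s)^2)"
    unfolding Im_lower_fourier_sum[OF assms(1) l_less] double sin_double cos_double_sin by simp
  also have "\<dots> = real N * cos s / (2 * sin s)"
    using sin_s by (simp add: power2_eq_square field_simps)
  finally have Im: "Im (lower_fourier_sum N l) = real N * cos s / (2 * sin s)" .
  have "cmod (fourier_diagonal sign_matrix N l) = 2 * \<bar>Im (lower_fourier_sum N l)\<bar>"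
    by (simp add: fourier_diagonal_sign_matrix complex_diff_cnj norm_mult)
  also have "\<dots> = real N * cot s"
    unfolding Im cot_def using sin_s cos_s by (simp add: abs_mult)
  finally show ?thesis by (simp add: s_def)
qed

lemma cot_lower_bound:
  assumes "0 < s" "s \<le> pi / 2"
  shows "1 / s - s / 2 \<le> cot s"
proof -
  have sin_s: "0 < sin s" and cos_s: "0 \<le> cos s"
    using assms by (auto intro!: sin_gt_zero cos_ge_zero)
  have "(sin (s / 2))^2 \<le> (s / 2)^2"
    using abs_sin_x_le_abs_x[of "s / 2"] by (metis abs_le_square_iff)
  then have "1 - s^2 / 2 \<le> cos s"
    using cos_double_sin[of "s / 2"] by (simp add: power_divide)
  then have "(1 - s^2 / 2) / s \<le> cos s / s"
    using assms by (intro divide_right_mono) auto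
  also have "\<dots> \<le> cos s / sin s"
    using sin_s cos_s sin_x_le_x[of s] assms by (intro divide_left_mono) auto
  finally show ?thesis
    using assms by (simp add: cot_def power2_eq_square field_simps)
qed

(* The kernel of the theorem, (e^x - e^y) / (e^x + e^y) = tanh ((x - y) / 2). *)
definition tanh_kernel :: "real \<times> real \<Rightarrow> complex" where
  "tanh_kernel = (\<lambda>(x, y). complex_of_real ((exp x - exp y) / (exp x + exp y)))"

lemma tanh_kernel_measurable_fst: "(\<lambda>s. tanh_kernel (s, t)) \<in> borel_measurable borel"
  by (simp add: tanh_kernel_def)

lemma tanh_kernel_measurable_snd: "(\<lambda>t. tanh_kernel (s, t)) \<in> borel_measurable borel"
  by (simp add: tanh_kernel_def)

lemma tanh_kernel_swap: "tanh_kernel (v, u) = - tanh_kernel (u, v)"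
proof -
  have swap: "(exp v - exp u) / (exp v + exp u) = - ((exp u - exp v) / (exp u + exp v))"
    by (simp add: add.commute minus_divide_left)
  show ?thesis
    unfolding tanh_kernel_def case_prod_conv swap by (rule of_real_minus)
qed

lemma tanh_kernel_near_one:
  fixes u v :: real
  assumes "v < u"
  shows "cmod (tanh_kernel (u, v) - 1) \<le> 2 * exp (v - u)"
proof -
  have pos: "0 < exp u + exp v" by (simp add: add_pos_pos)
  have "1 - (exp u - exp v) / (exp u + exp v) = 2 * exp v / (exp u + exp v)"
    using pos by (simp add: field_simps)
  also have "\<dots> \<le> 2 * exp v / exp u"
    by (rule divide_left_mono) (auto intro!: mult_pos_pos add_pos_pos)
  finally have "1 - (exp u - exp v) / (exp u + exp v) \<le> 2 * exp (v - u)"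
    by (simp add: exp_diff)
  moreover have "(exp u - exp v) / (exp u + exp v) \<le> 1"
    using pos by (simp add: divide_le_eq_1)
  moreover have "tanh_kernel (u, v) - 1 = of_real ((exp u - exp v) / (exp u + exp v) - 1)"
    by (simp only: tanh_kernel_def case_prod_conv of_real_diff of_real_1)
  ultimately show ?thesis
    by (simp only: norm_of_real)
qed

lemma sign_matrix_swap: "sign_matrix j i = - sign_matrix i j"
  by (simp add: sign_matrix_def)

(* On a grid of spacing h > 0 the matrix of the kernel differs from the sign matrix entrywise
   by at most 2 q^|i - j|, q = exp (-h), hence by O(N) in total. *)
lemma tanh_grid_sign_error:
  fixes a h :: real
  assumes h: "0 < h"
  defines "E i j \<equiv> cmod (tanh_kernel (a + h * real i, a + h * real j) - sign_matrix i j)"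
  shows "(\<Sum>i<N. \<Sum>j<N. E i j) \<le> 4 * real N * exp (- h) / (1 - exp (- h))"
proof -
  define q where "q = exp (- h)"
  have q: "0 < q" "q < 1" using h by (simp_all add: q_def)
  have E_sym: "E j i = E i j" for i j
    unfolding E_def tanh_kernel_swap[of "a + h * real j"] sign_matrix_swap[of j]
    by (metis minus_diff_eq minus_diff_minus norm_minus_commute)
  have E_diag: "E i i = 0" for i
    by (simp add: E_def tanh_kernel_def sign_matrix_def)
  have E_lower: "E i j \<le> 2 * q ^ (i - j)" if "j < i" for i j
  proof -
    have "E i j \<le> 2 * exp (h * real j - h * real i)"
      using tanh_kernel_near_one[of "a + h * real j" "a + h * real i"] that h
      by (simp add: E_def sign_matrix_def)
    also have "exp (h * real j - h * real i) = q ^ (i - j)"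
      using that by (simp add: q_def of_nat_diff algebra_simps flip: exp_of_nat_mult)
    finally show ?thesis .
  qed
  define L where "L i j = (if j < i then E i j else 0)" for i j
  have "E i j = L i j + L j i" for i j
    by (cases i j rule: linorder_cases) (simp_all add: L_def E_diag E_sym[of i j])
  then have "(\<Sum>i<N. \<Sum>j<N. E i j) = (\<Sum>i<N. \<Sum>j<N. L i j) + (\<Sum>i<N. \<Sum>j<N. L j i)"
    by (simp add: sum.distrib)
  also have "(\<Sum>i<N. \<Sum>j<N. L j i) = (\<Sum>i<N. \<Sum>j<N. L i j)"
    by (rule sum.swap)
  also have "(\<Sum>i<N. \<Sum>j<N. L i j) \<le> (\<Sum>i<N. 2 * q / (1 - q))"
  proof (rule sum_mono)
    fix i assume "i \<in> {..<N}"
    then have "(\<Sum>j<N. L i j) = (\<Sum>j<i. E i j)"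
      by (simp add: L_def sum.inter_filter[symmetric]) (intro sum.cong, auto)
    also have "\<dots> \<le> (\<Sum>j<i. 2 * q ^ (i - j))"
      by (intro sum_mono E_lower) simp
    also have "\<dots> = 2 * q * (\<Sum>k<i. q ^ k)"
      by (simp add: sum_distrib_left[symmetric] sum_power_diff)
    also have "\<dots> \<le> 2 * q * (1 / (1 - q))"
      using geometric_sum_less[of q "{..<i}"] q by (intro mult_left_mono) auto
    finally show "(\<Sum>j<N. L i j) \<le> 2 * q / (1 - q)" by simp
  qed
  finally show ?thesis
    by (simp add: q_def)
qed

lemma norm_fourier_diagonal_perturbation:
  "cmod (fourier_diagonal F N l)
     \<ge> cmod (fourier_diagonal G N l) - (\<Sum>i<N. \<Sum>j<N. cmod (F i j - G i j))"
proof -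
  define D where "D = (\<Sum>i<N. \<Sum>j<N. (F i j - G i j) * (fourier_mode N l i * cnj (fourier_mode N l j)))"
  have "fourier_diagonal G N l = fourier_diagonal F N l - D"
    unfolding fourier_diagonal_def D_def by (simp add: sum_subtractf left_diff_distrib)
  then have "cmod (fourier_diagonal G N l) \<le> cmod (fourier_diagonal F N l) + cmod D"
    by (simp add: norm_triangle_ineq4)
  moreover have "cmod D \<le> (\<Sum>i<N. \<Sum>j<N. cmod (F i j - G i j))"
    unfolding D_def
    by (rule order.trans[OF norm_sum sum_mono], rule order.trans[OF norm_sum sum_mono])
       (simp add: norm_mult)
  ultimately show ?thesis
    by linarith
qed

(* Summing N cot (pi l / N) over 1 <= l <= N/2 produces a harmonic sum, hence a log N term. *)
lemma sum_cot_lower_bound: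
  assumes N: "2 \<le> N"
  shows "(real N)^2 * (ln (real (N div 2) + 1) / pi - pi / 8)
           \<le> (\<Sum>l\<in>{1..N div 2}. real N * cot (pi * real l / real N))"
proof -
  define K where "K = N div 2"
  have K: "2 * K \<le> N" by (simp add: K_def)
  have "(\<Sum>l\<in>{1..K}. (real N)^2 / pi * inverse (real l) - pi / 2 * real l)
      \<le> (\<Sum>l\<in>{1..K}. real N * cot (pi * real l / real N))"
  proof (rule sum_mono)
    fix l assume l: "l \<in> {1..K}"
    then have "0 < pi * real l / real N" "pi * real l / real N \<le> pi / 2"
      using K by (auto simp: field_simps)
    from cot_lower_bound[OF this] have
      "real N * (1 / (pi * real l / real N) - pi * real l / real N / 2) \<le> real N * cot (pi * real l / real N)"
      using N by (intro mult_left_mono) auto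
    moreover have "real N * (1 / (pi * real l / real N) - pi * real l / real N / 2)
        = (real N)^2 / pi * inverse (real l) - pi / 2 * real l"
      using N l by (simp add: field_simps power2_eq_square)
    ultimately show "(real N)^2 / pi * inverse (real l) - pi / 2 * real l \<le> real N * cot (pi * real l / real N)"
      by simp
  qed
  moreover have "(\<Sum>l\<in>{1..K}. (real N)^2 / pi * inverse (real l) - pi / 2 * real l)
      = (real N)^2 / pi * harm K - pi / 4 * (real K * (real K + 1))"
  proof -
    have "(\<Sum>l\<in>{1..K}. real l) = real K * (real K + 1) / 2"
      by (induction K) (auto simp: field_simps)
    moreover have "(\<Sum>l\<in>{1..K}. (real N)^2 / pi * inverse (real l) - pi / 2 * real l)
        = (real N)^2 / pi * harm K - pi / 2 * (\<Sum>l\<in>{1..K}. real l)"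
      by (simp add: sum_subtractf sum_distrib_left harm_def)
    ultimately show ?thesis
      by simp
  qed
  moreover have "(real N)^2 / pi * ln (real K + 1) \<le> (real N)^2 / pi * harm K"
    by (intro mult_left_mono harm_ge_ln) simp
  moreover have "real K * (real K + 1) \<le> (real N)^2 / 2"
  proof -
    have "(2 * real K) * (2 * real K + 2) \<le> real N * (real N + real N)"
      using K N by (intro mult_mono) linarith+
    then show ?thesis by (simp add: power2_eq_square algebra_simps)
  qed
  then have "pi / 4 * (real K * (real K + 1)) \<le> (real N)^2 * (pi / 8)"
    using mult_left_mono[of _ _ "pi / 4"] by fastforce
  ultimately show ?thesis
    unfolding K_def[symmetric] by (simp add: algebra_simps)
qed

lemma tanh_grid_fourier_lower_bound:
  fixes a h :: real
  assumes N: "2 \<le> N" and h: "0 < h"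
  shows "ln (real (N div 2) + 1) / pi - pi / 8 - 2 * exp (- h) / (1 - exp (- h))
           \<le> (\<Sum>l<N. cmod (fourier_diagonal (\<lambda>i j. tanh_kernel (a + h * real i, a + h * real j)) N l))
               / (real N)^2"
proof -
  define F where "F = (\<lambda>i j. tanh_kernel (a + h * real i, a + h * real j))"
  define q where "q = exp (- h)"
  define E where "E = (\<Sum>i<N. \<Sum>j<N. cmod (F i j - sign_matrix i j))"
  define K where "K = N div 2"
  have q: "0 < q" "q < 1" using h by (simp_all add: q_def)
  have E: "E \<le> 4 * real N * q / (1 - q)"
    unfolding E_def F_def q_def by (rule tanh_grid_sign_error[OF h])
  have "(\<Sum>l\<in>{1..K}. real N * cot (pi * real l / real N) - E) \<le> (\<Sum>l\<in>{1..K}. cmod (fourier_diagonal F N l))"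
  proof (rule sum_mono)
    fix l assume "l \<in> {1..K}"
    then have "cmod (fourier_diagonal sign_matrix N l) = real N * cot (pi * real l / real N)"
      by (intro norm_fourier_diagonal_sign_matrix) (auto simp: K_def)
    then show "real N * cot (pi * real l / real N) - E \<le> cmod (fourier_diagonal F N l)"
      using norm_fourier_diagonal_perturbation[where F = F and G = sign_matrix and N = N and l = l] by (simp add: E_def)
  qed
  also have "\<dots> \<le> (\<Sum>l<N. cmod (fourier_diagonal F N l))"
    using N by (intro sum_mono2) (auto simp: K_def)
  finally have "(real N)^2 * (ln (real K + 1) / pi - pi / 8) - real K * E
      \<le> (\<Sum>l<N. cmod (fourier_diagonal F N l))"
    using sum_cot_lower_bound[OF N] by (simp add: sum_subtractf K_def)
  moreover have "real K * E \<le> (real N)^2 * (2 * q / (1 - q))"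
  proof -
    have "real K * E \<le> real K * (4 * real N * q / (1 - q))"
      using E by (intro mult_left_mono) auto
    also have "\<dots> = (2 * real K) * real N * (2 * q / (1 - q))"
      by simp
    also have "\<dots> \<le> real N * real N * (2 * q / (1 - q))"
      using q by (intro mult_right_mono) (auto simp: K_def)
    finally show ?thesis by (simp add: power2_eq_square)
  qed
  ultimately have "(real N)^2 * (ln (real K + 1) / pi - pi / 8 - 2 * q / (1 - q))
      \<le> (\<Sum>l<N. cmod (fourier_diagonal F N l))"
    by (simp add: algebra_simps)
  then show ?thesis
    using N unfolding F_def q_def K_def by (simp add: field_simps)
qed

lemma schur_norm_tanh_kernel_grid_bound:
  fixes a b h :: real
  assumes N: "2 \<le> N" and h: "0 < h" and fits: "h * (real N - 1) \<le> b - a"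
  shows "ereal (ln (real (N div 2) + 1) / pi - pi / 8 - 2 * exp (- h) / (1 - exp (- h)))
           \<le> schur_norm {a..b} {a..b} tanh_kernel"
proof -
  define x where "x = (\<lambda>i::nat. a + h * real i)"
  have "x ` {..<N} \<subseteq> {a..b}"
  proof
    fix t assume "t \<in> x ` {..<N}"
    then obtain i where i: "i < N" "t = x i" by auto
    then have "h * real i \<le> h * (real N - 1)"
      using h by (intro mult_left_mono) auto
    with fits have "x i \<le> b"
      unfolding x_def by linarith
    moreover have "a \<le> x i"
      using h by (simp add: x_def)
    ultimately show "t \<in> {a..b}"
      using i by simp
  qed
  moreover have "inj_on x {..<N}"
    using h by (auto simp: inj_on_def x_def)
  ultimately have "ereal ((\<Sum>l<N. cmod (fourier_diagonal (\<lambda>i j. tanh_kernel (x i, x j)) N l)) / (real N)^2)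
      \<le> schur_norm {a..b} {a..b} tanh_kernel"
    using N by (intro schur_norm_ge_fourier_diagonal tanh_kernel_measurable_fst tanh_kernel_measurable_snd)
      auto
  with tanh_grid_fourier_lower_bound[OF N h, of a] show ?thesis
    by (intro order_trans[OF _ \<open>ereal _ \<le> _\<close>]) (simp add: x_def)
qed

lemma five_le_exp_two: "5 \<le> exp (2::real)"
proof -
  have "1 + 2 + 2^2 / 2 \<le> exp (2::real)"
    by (rule exp_lower_Taylor_quadratic) simp
  then show ?thesis by simp
qed

lemma ln_8_le: "ln (8::real) \<le> 12 / 5"
proof -
  have "1 + 1.2 + 1.2^2 / 2 \<le> exp (1.2::real)"
    by (rule exp_lower_Taylor_quadratic) simp
  then have "2.92 * 2.92 \<le> exp (1.2::real) * exp 1.2"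
    by (intro mult_mono) (auto simp: power2_eq_square)
  then have "8 \<le> exp (12 / 5::real)"
    by (simp flip: exp_add)
  then have "ln 8 \<le> ln (exp (12 / 5::real))"
    by (subst ln_le_cancel_iff) auto
  then show ?thesis
    by simp
qed

lemma exp_minus_4_ratio: "2 * exp (- 4) / (1 - exp (- 4)) \<le> (1 / 12 :: real)"
proof -
  have "5 * 5 \<le> exp (2::real) * exp 2"
    using five_le_exp_two by (intro mult_mono) auto
  then have e4: "25 \<le> exp (4::real)"
    by (simp flip: exp_add)
  then have "2 * exp (- 4) / (1 - exp (- 4)) = 2 / (exp 4 - 1 :: real)"
    by (simp add: exp_minus field_simps)
  also have "\<dots> \<le> 2 / 24"
    using e4 by (intro divide_left_mono) auto
  finally show ?thesis by simp
qed

(* The arithmetic of the long interval case: if log N >= log L - log 8 and log L >= 7, then the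
   bound of schur_norm_tanh_kernel_grid_bound (for spacing 4) exceeds (1 + log L) / 9. *)
lemma long_interval_arithmetic:
  fixes t m :: real
  assumes t: "7 \<le> t" and m: "t - ln 8 \<le> m"
  shows "1/9 * (1 + t) \<le> m / pi - pi / 8 - 2 * exp (- 4) / (1 - exp (- 4))"
proof -
  have pi_le: "pi \<le> 16 / 5"
    using pi_approx(2) by simp
  have "(t - 12 / 5) / (16 / 5) \<le> (t - 12 / 5) / pi"
    using t pi_le by (intro divide_left_mono) auto
  also have "\<dots> \<le> m / pi"
    using m ln_8_le by (intro divide_right_mono) auto
  finally have "(t - 12 / 5) * 5 / 16 \<le> m / pi"
    by (simp only: divide_divide_eq_right)
  moreover have "1/9 * (1 + t) \<le> (t - 12 / 5) * 5 / 16 - 2 / 5 - 1 / 12"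
    using t by (simp add: field_simps)
  ultimately show ?thesis
    using pi_le exp_minus_4_ratio by linarith
qed

lemma grid_size_for_length:
  fixes L :: real
  assumes L: "8 \<le> L"
  obtains N :: nat where "2 \<le> N" "4 * (real N - 1) \<le> L" "L / 8 \<le> real (N div 2) + 1"
proof
  define N where "N = nat \<lfloor>L / 4\<rfloor> + 1"
  have N: "real N = of_int \<lfloor>L / 4\<rfloor> + 1"
    using L by (simp add: N_def)
  have "of_int \<lfloor>L / 4\<rfloor> \<le> L / 4"
    by (rule of_int_floor_le)
  then show "4 * (real N - 1) \<le> L"
    unfolding N by simp
  have "L / 4 < of_int \<lfloor>L / 4\<rfloor> + 1"
    by (rule real_of_int_floor_add_one_gt)
  then have N_lower: "L / 4 < real N"
    unfolding N by simp
  then show "2 \<le> N"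
    using L by linarith
  have "N \<le> 2 * (N div 2) + 1"
    by presburger
  then show "L / 8 \<le> real (N div 2) + 1"
    using N_lower by linarith
qed

(* Long intervals: a grid of spacing 4 with about (b - a) / 4 points. *)
lemma schur_norm_tanh_kernel_long:
  fixes a b :: real
  assumes "a < b" and long: "7 \<le> ln (b - a)"
  shows "ereal (1/9 * (1 + ln (b - a))) \<le> schur_norm {a..b} {a..b} tanh_kernel"
proof -
  define L where "L = b - a"
  have "1 + 7 \<le> exp (7::real)"
    by (rule exp_ge_add_one_self)
  also have "exp 7 \<le> L"
    using long \<open>a < b\<close> by (simp add: L_def ln_ge_iff)
  finally have L: "8 \<le> L" by simp
  then obtain N where N: "2 \<le> N" "4 * (real N - 1) \<le> L" "L / 8 \<le> real (N div 2) + 1"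
    by (rule grid_size_for_length)
  then have "ln (L / 8) \<le> ln (real (N div 2) + 1)"
    using L by (subst ln_le_cancel_iff) auto
  then have "1/9 * (1 + ln L) \<le> ln (real (N div 2) + 1) / pi - pi / 8 - 2 * exp (- 4) / (1 - exp (- 4))"
    using long L by (intro long_interval_arithmetic) (simp_all add: L_def ln_div)
  moreover have "ereal (ln (real (N div 2) + 1) / pi - pi / 8 - 2 * exp (- 4) / (1 - exp (- 4)))
      \<le> schur_norm {a..b} {a..b} tanh_kernel"
    using N by (intro schur_norm_tanh_kernel_grid_bound) (simp_all add: L_def)
  ultimately show ?thesis
    unfolding L_def by (intro order_trans[OF _ \<open>ereal _ \<le> _\<close>]) simp
qed

(* Short intervals: the 1 x 1 test matrix at the two endpoints gives tanh ((b - a) / 2). *)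
lemma schur_norm_tanh_kernel_endpoints:
  fixes a b :: real
  assumes "a \<le> b"
  shows "ereal ((exp (b - a) - 1) / (exp (b - a) + 1)) \<le> schur_norm {a..b} {a..b} tanh_kernel"
proof -
  have endpoints: "(\<lambda>_. b) ` {..<Suc 0} \<subseteq> {a..b}" "(\<lambda>_. a) ` {..<Suc 0} \<subseteq> {a..b}"
    using assms by auto
  have "ereal (cmod (tanh_kernel (b, a))) \<le> schur_norm {a..b} {a..b} tanh_kernel"
    using endpoints schur_norm_ge_grid[where N = 1 and M = 1 and x = "\<lambda>_. b" and y = "\<lambda>_. a"
        and K = "\<lambda>_ _. 1" and g = "\<lambda>_. 1" and X = "{a..b}" and Y = "{a..b}" and \<Phi> = tanh_kernel] assms
    by (simp add: l2_contraction_def tanh_kernel_measurable_fst tanh_kernel_measurable_snd inj_on_def)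
  moreover have "(exp (b - a) - 1) / (exp (b - a) + 1)
      = ((exp b - exp a) / exp a) / ((exp b + exp a) / exp a)"
    by (simp add: exp_diff diff_divide_distrib add_divide_distrib)
  then have ratio: "(exp b - exp a) / (exp b + exp a) = (exp (b - a) - 1) / (exp (b - a) + 1)"
    by simp
  have "0 \<le> (exp b - exp a) / (exp b + exp a)"
    using assms by (simp add: add_pos_pos)
  then have "cmod (tanh_kernel (b, a)) = (exp (b - a) - 1) / (exp (b - a) + 1)"
    unfolding tanh_kernel_def case_prod_conv norm_of_real ratio by (rule abs_of_nonneg)
  ultimately show ?thesis
    by simp
qed

lemma min_log_le_tanh_half:
  fixes L :: real
  assumes L: "0 < L" and short: "ln L \<le> 7"
  shows "1/9 * min L (1 + log_plus L) \<le> (exp L - 1) / (exp L + 1)"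
proof -
  define E where "E = exp L"
  have E: "1 + L \<le> E" "0 < E"
    by (simp_all add: E_def)
  consider "L \<le> 1" | "1 < L" "ln L \<le> 2" | "2 < ln L"
    by linarith
  then have "1/9 * min L (1 + log_plus L) \<le> (E - 1) / (E + 1)"
  proof cases
    case 1
    have "E \<le> exp 1"
      using 1 by (simp add: E_def)
    then have "E + 1 \<le> 9"
      using exp_le by linarith
    then have "L / 9 \<le> L / (E + 1)"
      using L E by (intro divide_left_mono) auto
    also have "\<dots> \<le> (E - 1) / (E + 1)"
      using E by (intro divide_right_mono) auto
    finally show ?thesis by simp
  next
    case 2
    then have "1/9 * min L (1 + log_plus L) \<le> 1/3"
      by (simp add: log_plus_def)
    also have "1/3 \<le> (E - 1) / (E + 1)"
      using E 2 by (simp add: field_simps)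
    finally show ?thesis .
  next
    case 3
    have "5 \<le> exp (2::real)"
      by (rule five_le_exp_two)
    also have "exp 2 \<le> L"
      using 3 L by (simp add: ln_ge_iff[symmetric])
    finally have L5: "5 \<le> L" .
    have "1 + L + L^2 / 2 \<le> E"
      unfolding E_def using L by (intro exp_lower_Taylor_quadratic) simp
    moreover have "5 * 5 \<le> L * L"
      using L5 by (intro mult_mono) auto
    ultimately have "17 \<le> E"
      using L5 by (simp add: power2_eq_square)
    have "1/9 * min L (1 + log_plus L) \<le> 8/9"
      using short 3 by (simp add: log_plus_def)
    also have "8/9 \<le> (E - 1) / (E + 1)"
      using \<open>17 \<le> E\<close> by (simp add: field_simps)
    finally show ?thesis .
  qed
  then show ?thesis by (simp add: E_def)
qed

theorem mainTheorem18:
  fixes a b :: real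
  assumes "a < b"
  shows "ereal (1/9 * min (b - a) (1 + log_plus (b - a)))
           \<le> schur_norm {a..b} {a..b}
                (\<lambda>(x, y). complex_of_real ((exp x - exp y) / (exp x + exp y)))"
proof -
  define L where "L = b - a"
  have L: "0 < L" using assms by (simp add: L_def)
  have "ereal (1/9 * min L (1 + log_plus L)) \<le> schur_norm {a..b} {a..b} tanh_kernel"
  proof (cases "ln L \<le> 7")
    case True
    then have "ereal (1/9 * min L (1 + log_plus L)) \<le> ereal ((exp L - 1) / (exp L + 1))"
      using min_log_le_tanh_half[OF L] by simp
    also have "\<dots> \<le> schur_norm {a..b} {a..b} tanh_kernel"
      unfolding L_def using assms by (intro schur_norm_tanh_kernel_endpoints) simp
    finally show ?thesis .
  next
    case False
    then have "ereal (1/9 * min L (1 + log_plus L)) \<le> ereal (1/9 * (1 + ln L))"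
      by (simp add: log_plus_def)
    also have "\<dots> \<le> schur_norm {a..b} {a..b} tanh_kernel"
      unfolding L_def using assms False by (intro schur_norm_tanh_kernel_long) (simp_all add: L_def)
    finally show ?thesis .
  qed
  then show ?thesis
    by (simp add: L_def tanh_kernel_def)
qed

end
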